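(* Suppose $f$ is $L_f$-smooth and $L_{\mathbf S}^{\max}<\infty$. Let $T\ge1$ and $0<\gamma\le 1/\big(L_f\sqrt{L_{\mathcal D}L_{\mathbf S}^{\max}T}\big)$, and let $(x^t)$ be generated by Double Sketched GD. Then $$\min_{0\le t<T}\mathbb E\|\nabla\tilde f(x^t)\|^2\le\frac{3(\tilde f(x^0)-\tilde f^{\inf})}{\gamma T}+\gamma L_f^2L_{\mathcal D}L_{\mathbf S}^{\max}\big(\tilde f^{\inf}-f^{\inf}\big).$$
   Context: Let $f:\mathbb R^d\to\mathbb R$, fix $s\in\mathbb R^d$, and let $\mathcal D$ be a distribution of random matrices $\mathbf S\in\mathbb R^{d\times d}$ with $\mathbb E[\mathbf S]=I$ and $\mathbb E[\mathbf S^\top\mathbf S]$ finite. Define $f_{\mathbf S}(x)=f(s+\mathbf S(x-s))$, $\tilde f(x)=\mathbb E_{\mathbf S\sim\mathcal D}[f_{\mathbf S}(x)]$, $\tilde f^{\inf}=\inf_x\tilde f(x)$, $L_{\mathcal D}=\lambda_{\max}(\mathbb E[\mathbf S^\top\mathbf S])$, and $L_{\mathbf S}^{\max}$ the smallest constant with $\lambda_{\max}(\mathbf S^\top\mathbf S)\le L_{\mathbf S}^{\max}$ a.s. Double Sketched GD: given $x^0$, for $t\ge0$ draw $\mathbf S^t\sim\mathcal D$ independently of the past and set $x^{t+1}=x^t-\gamma(\mathbf S^t)^\top\nabla f(s+\mathbf S^t(x^t-s))$. $f$ is $L_f$-smooth if differentiable, $f(x+h)\le f(x)+\langle\nabla f(x),h\rangle+\frac{L_f}{2}\|h\|^2$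 for all $x,h$, and bounded below by $f^{\inf}\in\mathbb R$. *)

theory Defs
  imports "HOL-Analysis.Analysis" "HOL-Probability.Probability"
begin

type_synonym 'n vect = "real ^ 'n"
type_synonym 'n matr = "real ^ 'n ^ 'n"

definition grad :: "('n::finite vect \<Rightarrow> real) \<Rightarrow> 'n vect \<Rightarrow> 'n vect" where
  "grad F x = (THE D. GDERIV F x :> D)"

definition L_smooth :: "real \<Rightarrow> ('n::finite vect \<Rightarrow> real) \<Rightarrow> bool" where
  "L_smooth L F \<longleftrightarrow> (\<forall>x. F differentiable (at x)) \<and>
     (\<forall>x h. F (x + h) \<le> F x + grad F x \<bullet> h + L / 2 * (norm h)^2)"

definition lambda_max :: "'n::finite matr \<Rightarrow> real" where
  "lambda_max M = Max {c. \<exists>v. v \<noteq> 0 \<and> M *v v = c *\<^sub>R v}"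

definition f_S :: "('n::finite vect \<Rightarrow> real) \<Rightarrow> 'n vect \<Rightarrow> 'n matr \<Rightarrow> 'n vect \<Rightarrow> real" where
  "f_S f s S x = f (s + S *v (x - s))"

definition f_tilde :: "'n::finite matr measure \<Rightarrow> ('n vect \<Rightarrow> real) \<Rightarrow> 'n vect \<Rightarrow> 'n vect \<Rightarrow> real" where
  "f_tilde D f s x = (\<integral>S. f_S f s S x \<partial>D)"

definition L_D :: "'n::finite matr measure \<Rightarrow> real" where
  "L_D D = lambda_max (\<integral>S. transpose S ** S \<partial>D)"

definition L_S_max :: "'n::finite matr measure \<Rightarrow> real" where
  "L_S_max D = Inf {L. AE S in D. lambda_max (transpose S ** S) \<le> L}"

primrec dsgd :: "('n::finite vect \<Rightarrow> real) \<Rightarrow> 'n vect \<Rightarrow> real \<Rightarrow> 'n vect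
    \<Rightarrow> (nat \<Rightarrow> 'n matr) \<Rightarrow> nat \<Rightarrow> 'n vect" where
  "dsgd f s \<gamma> x0 \<omega> 0 = x0"
| "dsgd f s \<gamma> x0 \<omega> (Suc t) = dsgd f s \<gamma> x0 \<omega> t
     - \<gamma> *\<^sub>R (transpose (\<omega> t) *v grad f (s + \<omega> t *v (dsgd f s \<gamma> x0 \<omega> t - s)))"

end

theory Submission
  imports Defs
begin

(* The sketched objective f~ is (L_f L_D)-smooth with gradient E[S^T grad f(s + S(x - s))],
   and the second moment of the stochastic gradient g = S^T grad f(s + S(x - s)) is at most
   2 L_f L_S^max (f~(x) - f^inf), because grad f is controlled by the suboptimality of f.
   The descent lemma for f~ therefore gives, with a = gamma^2 L_f^2 L_D L_S^max,
     E[f~(x+) - f~^inf] + gamma |grad f~(x)|^2 <= (1 + a)(f~(x) - f~^inf) + a (f~^inf - f^inf).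
   Weighting step t by (1 + a)^-(t+1) and unrolling over the independent sketches bounds a
   weighted average of E|grad f~(x^t)|^2; the step size makes aT <= 1, so every weight is at
   least 1/3 and the weighted average dominates the minimum. *)

section \<open>Quadratic forms of symmetric matrices\<close>

lemma inner_matrix_vector_mult_left:
  "((A::real^'n^'m) *v x) \<bullet> y = x \<bullet> (transpose A *v y)"
  by (metis dot_lmul_matrix vector_transpose_matrix)

lemma symmetric_matrix_inner_commute:
  assumes "transpose M = (M::real^'n^'n)"
  shows "x \<bullet> (M *v y) = (M *v x) \<bullet> y"
  using inner_matrix_vector_mult_left[of M x y] assms by (simp add: inner_commute)

lemma eigenvectors_orthogonal_symmetric:
  assumes "transpose M = (M::real^'n^'n)" "M *v v = c *\<^sub>R v" "M *v w = d *\<^sub>R w" "c \<noteq> d"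
  shows "v \<bullet> w = 0"
proof -
  have "c * (v \<bullet> w) = (M *v v) \<bullet> w" using assms by simp
  also have "\<dots> = v \<bullet> (M *v w)" using symmetric_matrix_inner_commute[OF assms(1)] by simp
  also have "\<dots> = d * (v \<bullet> w)" using assms by simp
  finally show ?thesis using assms(4) by simp
qed

lemma finite_eigenvalues_symmetric:
  assumes "transpose M = (M::real^'n::finite^'n)"
  shows "finite {c. \<exists>v. v \<noteq> 0 \<and> M *v v = c *\<^sub>R v}"
proof -
  let ?E = "{c. \<exists>v. v \<noteq> 0 \<and> M *v v = c *\<^sub>R v}"
  define vec where "vec c = (SOME v. v \<noteq> 0 \<and> M *v v = c *\<^sub>R v)" for c
  have vec: "vec c \<noteq> 0 \<and> M *v vec c = c *\<^sub>R vec c" if "c \<in> ?E" for c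
    unfolding vec_def by (rule someI_ex) (use that in simp)
  have inj: "inj_on vec ?E"
  proof (rule inj_onI)
    fix c d assume c: "c \<in> ?E" and d: "d \<in> ?E" and eq: "vec c = vec d"
    have "c *\<^sub>R vec c = d *\<^sub>R vec c" using vec[OF c] vec[OF d] eq by metis
    then show "c = d" using vec[OF c] scaleR_cancel_right by blast
  qed
  have "pairwise orthogonal (vec ` ?E)"
    unfolding pairwise_def orthogonal_def
  proof (intro ballI impI)
    fix x y assume "x \<in> vec ` ?E" "y \<in> vec ` ?E" "x \<noteq> y"
    then obtain c d where c: "c \<in> ?E" "x = vec c" and d: "d \<in> ?E" "y = vec d" by blast
    with \<open>x \<noteq> y\<close> have "c \<noteq> d" by blast
    then show "x \<bullet> y = 0"
      using eigenvectors_orthogonal_symmetric[OF assms] vec[OF c(1)] vec[OF d(1)] c d by simp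
  qed
  moreover have "0 \<notin> vec ` ?E" using vec by (metis (no_types, lifting) imageE)
  ultimately have "independent (vec ` ?E)" by (rule pairwise_orthogonal_independent)
  then have "finite (vec ` ?E)" by (rule finiteI_independent)
  then show ?thesis using inj finite_imageD by blast
qed

lemma nonpos_if_le_pos_multiples:
  fixes a b :: real
  assumes "\<And>t. t > 0 \<Longrightarrow> a \<le> t * b"
  shows "a \<le> 0"
proof (rule field_le_epsilon)
  fix e :: real assume e: "e > 0"
  let ?t = "e / (\<bar>b\<bar> + 1)"
  have "?t > 0" using e by (simp add: add_pos_nonneg)
  then have "a \<le> ?t * b" by (rule assms)
  also have "\<dots> \<le> ?t * \<bar>b\<bar>" using e by (intro mult_left_mono) auto
  also have "\<dots> \<le> e" using e by (simp add: field_simps)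
  finally show "a \<le> 0 + e" by simp
qed

lemma psd_quadratic_form_zero_imp_kernel:
  assumes sym: "transpose N = (N::real^'n::finite^'n)"
    and psd: "\<And>h. 0 \<le> h \<bullet> (N *v h)" and zero: "v \<bullet> (N *v v) = 0"
  shows "N *v v = 0"
proof -
  let ?w = "N *v v"
  \<comment> \<open>\<open>0 \<le> q(v - t w) = -2t\<parallel>w\<parallel>\<^sup>2 + t\<^sup>2 q(w)\<close> for all \<open>t > 0\<close>, where \<open>q\<close> is the form of \<open>N\<close>.\<close>
  have "2 * (?w \<bullet> ?w) \<le> t * (?w \<bullet> (N *v ?w))" if "t > 0" for t
  proof -
    have "0 \<le> (v - t *\<^sub>R ?w) \<bullet> (N *v (v - t *\<^sub>R ?w))" by (rule psd)
    also have "\<dots> = v \<bullet> (N *v v) - t * (v \<bullet> (N *v ?w)) - t * (?w \<bullet> ?w)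
        + t^2 * (?w \<bullet> (N *v ?w))"
      by (simp add: matrix_vector_mult_diff_distrib matrix_vector_mult_scaleR inner_diff_left
          inner_diff_right inner_commute power2_eq_square algebra_simps)
    also have "v \<bullet> (N *v ?w) = ?w \<bullet> ?w"
      using symmetric_matrix_inner_commute[OF sym, of v ?w] by simp
    finally have "t * (2 * (?w \<bullet> ?w)) \<le> t * (t * (?w \<bullet> (N *v ?w)))"
      using zero by (simp add: power2_eq_square algebra_simps)
    then show ?thesis using that by simp
  qed
  then have "2 * (?w \<bullet> ?w) \<le> 0"
    by (intro nonpos_if_le_pos_multiples)
  then show ?thesis by (meson inner_gt_zero_iff not_le zero_less_mult_iff zero_less_numeral)
qed

lemma quadratic_form_scaleR:
  "(a *\<^sub>R h) \<bullet> ((M::real^'n^'n) *v (a *\<^sub>R h)) = a^2 * (h \<bullet> (M *v h))"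
  by (simp add: matrix_vector_mult_scaleR power2_eq_square)

lemma symmetric_quadratic_form_max_eigenvalue:
  assumes sym: "transpose M = (M::real^'n::finite^'n)"
  obtains c v where "v \<noteq> 0" "M *v v = c *\<^sub>R v" "\<And>h. h \<bullet> (M *v h) \<le> c * (norm h)^2"
proof -
  let ?q = "\<lambda>h. h \<bullet> (M *v h)"
  have cont: "continuous_on (sphere 0 1) ?q"
    by (intro continuous_intros)
  have "sphere (0::real^'n) 1 \<noteq> {}"
    using vector_choose_size[of 1] by auto
  then obtain v where "v \<in> sphere 0 1" and "\<forall>u \<in> sphere 0 1. ?q u \<le> ?q v"
    using continuous_attains_sup[OF compact_sphere _ cont] by blast
  then have v: "norm v = 1" and vmax: "\<And>u. norm u = 1 \<Longrightarrow> ?q u \<le> ?q v" by auto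
  define c where "c = ?q v"
  have bound: "?q h \<le> c * (norm h)^2" for h
  proof (cases "h = 0")
    case False
    have "?q ((1 / norm h) *\<^sub>R h) \<le> c"
      unfolding c_def by (rule vmax) (use False in simp)
    then have "(1 / norm h)^2 * ?q h \<le> c" by (simp only: quadratic_form_scaleR)
    then show ?thesis using False by (simp add: field_simps)
  qed simp
  \<comment> \<open>\<open>c I - M\<close> is positive semidefinite and its form vanishes at \<open>v\<close>.\<close>
  define N where "N = c *\<^sub>R mat 1 - M"
  have N_apply: "N *v h = c *\<^sub>R h - M *v h" for h
    by (simp add: N_def matrix_vector_mult_diff_rdistrib scaleR_matrix_vector_assoc[symmetric])
  have "transpose N = N"
    using sym by (simp add: N_def transpose_def transpose_scalar vec_eq_iff mat_def)
  moreover have "0 \<le> h \<bullet> (N *v h)" for h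
    using bound[of h] by (simp add: N_apply inner_diff_right power2_norm_eq_inner)
  moreover have "v \<bullet> (N *v v) = 0"
    using v by (simp add: N_apply inner_diff_right c_def power2_norm_eq_inner[symmetric])
  ultimately have "N *v v = 0" by (rule psd_quadratic_form_zero_imp_kernel)
  then have "M *v v = c *\<^sub>R v" by (simp add: N_apply)
  moreover have "v \<noteq> 0" using v by auto
  ultimately show ?thesis using bound that by blast
qed

lemma quadratic_form_le_lambda_max:
  assumes sym: "transpose M = (M::real^'n::finite^'n)"
  shows "h \<bullet> (M *v h) \<le> lambda_max M * (norm h)^2"
proof -
  obtain c v where "v \<noteq> 0" "M *v v = c *\<^sub>R v" and bound: "\<And>h. h \<bullet> (M *v h) \<le> c * (norm h)^2"
    using symmetric_quadratic_form_max_eigenvalue[OF sym] by blast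
  then have "c \<le> lambda_max M"
    unfolding lambda_max_def by (intro Max_ge finite_eigenvalues_symmetric[OF sym]) blast
  then have "c * (norm h)^2 \<le> lambda_max M * (norm h)^2" by (intro mult_right_mono) auto
  with bound[of h] show ?thesis by linarith
qed

lemma norm_matrix_vector_mult_sq:
  "(norm ((S::real^'n::finite^'m::finite) *v v))^2 = v \<bullet> ((transpose S ** S) *v v)"
  by (simp add: power2_norm_eq_inner inner_matrix_vector_mult_left matrix_vector_mul_assoc[symmetric])

lemma transpose_gram_matrix: "transpose (transpose S ** S) = transpose (S::real^'n::finite^'m) ** S"
  by (simp add: matrix_transpose_mul)

lemma norm_matrix_vector_mult_sq_le_lambda_max:
  "(norm ((S::real^'n::finite^'n) *v v))^2 \<le> lambda_max (transpose S ** S) * (norm v)^2"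
  unfolding norm_matrix_vector_mult_sq by (rule quadratic_form_le_lambda_max[OF transpose_gram_matrix])

lemma lambda_max_gram_nonneg: "0 \<le> lambda_max (transpose (S::real^'n::finite^'n) ** S)"
proof -
  obtain v :: "real^'n" where v: "norm v = 1" using vector_choose_size[of 1] by auto
  have "0 \<le> (norm (S *v v))^2" by simp
  also have "\<dots> \<le> lambda_max (transpose S ** S)"
    using norm_matrix_vector_mult_sq_le_lambda_max[of S v] v by simp
  finally show ?thesis .
qed

lemma norm_matrix_vector_mult_le_sqrt:
  assumes "lambda_max (transpose S ** S) \<le> L"
  shows "norm ((S::real^'n::finite^'n) *v v) \<le> sqrt L * norm v"
proof -
  have "(norm (S *v v))^2 \<le> L * (norm v)^2"
    using norm_matrix_vector_mult_sq_le_lambda_max[of S v] assms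
    by (meson mult_right_mono order_trans zero_le_power2)
  then show ?thesis by (metis real_le_rsqrt real_sqrt_mult real_sqrt_abs abs_norm_cancel)
qed

lemma norm_transpose_matrix_vector_le:
  assumes bound: "\<And>v. norm ((S::real^'n::finite^'n) *v v) \<le> K * norm v"
  shows "norm (transpose S *v v) \<le> K * norm v"
proof -
  let ?u = "transpose S *v v"
  have "norm ?u * norm ?u = ?u \<bullet> ?u"
    by (simp only: power2_norm_eq_inner[symmetric] power2_eq_square)
  also have "\<dots> = v \<bullet> (S *v ?u)"
    by (simp only: inner_matrix_vector_mult_left transpose_transpose)
  also have "\<dots> \<le> norm v * norm (S *v ?u)" by (rule norm_cauchy_schwarz)
  also have "\<dots> \<le> norm v * (K * norm ?u)" by (intro mult_left_mono bound) auto
  finally have "norm ?u * norm ?u \<le> (K * norm v) * norm ?u" by (simp add: algebra_simps)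
  moreover have "0 \<le> K"
    using bound[of "axis undefined 1"] by (metis norm_axis_1 mult.right_neutral norm_ge_zero order_trans)
  ultimately show ?thesis
    by (cases "norm ?u = 0") (auto simp: mult_le_cancel_right)
qed

lemma continuous_on_matrix_vector_mult [continuous_intros]:
  fixes A :: "'a::topological_space \<Rightarrow> real^'n::finite^'m::finite"
  assumes "continuous_on X A" "continuous_on X v"
  shows "continuous_on X (\<lambda>x. A x *v v x)"
  unfolding matrix_vector_mult_def
  by (intro continuous_intros continuous_on_vec_lambda assms)

lemma continuous_on_transpose [continuous_intros]:
  fixes A :: "'a::topological_space \<Rightarrow> real^'n::finite^'m::finite"
  assumes "continuous_on X A"
  shows "continuous_on X (\<lambda>x. transpose (A x))"
  unfolding transpose_def
  by (intro continuous_intros continuous_on_vec_lambda assms)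

lemma borel_measurable_matrix_vector_mult [measurable]:
  fixes A :: "'a \<Rightarrow> real^'n::finite^'m::finite"
  assumes "A \<in> borel_measurable M" "v \<in> borel_measurable M"
  shows "(\<lambda>x. A x *v v x) \<in> borel_measurable M"
  by (rule borel_measurable_continuous_Pair[OF assms]) (intro continuous_intros)

lemma borel_measurable_transpose [measurable]:
  fixes A :: "'a \<Rightarrow> real^'n::finite^'m::finite"
  assumes "A \<in> borel_measurable M"
  shows "(\<lambda>x. transpose (A x)) \<in> borel_measurable M"
  using borel_measurable_continuous_onI[OF continuous_on_transpose[OF continuous_on_id]] assms
  by (rule measurable_compose[rotated])

lemma bounded_linear_transpose: "bounded_linear (transpose :: real^'n::finite^'m::finite \<Rightarrow> _)"
  unfolding linear_conv_bounded_linear[symmetric]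
  by (rule linearI) (simp_all add: transpose_def vec_eq_iff transpose_scalar)

lemma bounded_linear_quadratic_form: "bounded_linear (\<lambda>M::real^'n::finite^'n. h \<bullet> (M *v h))"
  unfolding linear_conv_bounded_linear[symmetric]
  by (rule linearI) (simp_all add: matrix_vector_mult_add_rdistrib inner_add_right
      scaleR_matrix_vector_assoc[symmetric])

section \<open>Gradients and smoothness\<close>

lemma grad_eqI:
  assumes "(F has_derivative (\<lambda>h. d \<bullet> h)) (at x)"
  shows "grad F x = d"
  unfolding grad_def
proof (rule the_equality)
  show "GDERIV F x :> d" using assms by (simp add: gderiv_def inner_commute)
next
  fix d' assume "GDERIV F x :> d'"
  then have "(\<lambda>h. h \<bullet> d') = (\<lambda>h. h \<bullet> d)"
    using assms by (intro has_derivative_unique) (auto simp: gderiv_def inner_commute)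
  then have "(d' - d) \<bullet> d' = (d' - d) \<bullet> d" by metis
  then have "(d' - d) \<bullet> (d' - d) = 0" by (simp add: inner_diff_right)
  then show "d' = d" by simp
qed

lemma has_derivative_grad:
  assumes "F differentiable (at x)"
  shows "(F has_derivative (\<lambda>h. grad F x \<bullet> h)) (at x)"
proof -
  obtain F' where F': "(F has_derivative F') (at x)"
    using assms by (auto simp: differentiable_def)
  then have "linear F'" using has_derivative_linear by blast
  then have "F' = (\<lambda>h. adjoint F' 1 \<bullet> h)"
    using adjoint_works[of F' _ 1] by (auto simp: inner_commute)
  with F' have "(F has_derivative (\<lambda>h. adjoint F' 1 \<bullet> h)) (at x)" by simp
  then show ?thesis using grad_eqI by metis
qed

lemma grad_directional_quotient_tendsto:
  assumes "F differentiable (at x)"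
  shows "((\<lambda>t. (F (x + t *\<^sub>R b) - F x) / t) \<longlongrightarrow> grad F x \<bullet> b) (at 0)"
proof -
  have line: "((\<lambda>t. x + t *\<^sub>R b) has_derivative (\<lambda>t. t *\<^sub>R b)) (at 0)"
    by (auto intro!: derivative_eq_intros)
  have "(F has_derivative (\<lambda>h. grad F x \<bullet> h)) (at (x + 0 *\<^sub>R b))"
    using has_derivative_grad[OF assms] by simp
  from has_derivative_compose[OF line this]
  have "((\<lambda>t. F (x + t *\<^sub>R b)) has_derivative (\<lambda>t. grad F x \<bullet> (t *\<^sub>R b))) (at 0)" .
  then have "((\<lambda>t. F (x + t *\<^sub>R b)) has_real_derivative grad F x \<bullet> b) (at 0)"
    by (simp add: has_field_derivative_def mult_commute_abs)
  then show ?thesis by (simp add: DERIV_def)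
qed

lemma grad_borel_measurable:
  fixes F :: "real^'n::finite \<Rightarrow> real"
  assumes diff: "\<And>x. F differentiable (at x)"
  shows "grad F \<in> borel_measurable borel"
proof (rule borel_measurable_euclidean_space[THEN iffD2], rule ballI)
  fix b :: "real^'n"
  define t :: "nat \<Rightarrow> real" where "t = (\<lambda>n. inverse (real (Suc n)))"
  have t: "t \<longlonglongrightarrow> 0" "\<And>n. t n \<in> UNIV - {0}"
    unfolding t_def using LIMSEQ_inverse_real_of_nat by auto
  have cont: "continuous_on UNIV F"
    using diff by (meson continuous_at_imp_continuous_on differentiable_imp_continuous_within)
  show "(\<lambda>x. grad F x \<bullet> b) \<in> borel_measurable borel"
  proof (rule borel_measurable_LIMSEQ_real)
    fix x
    show "(\<lambda>n. (F (x + t n *\<^sub>R b) - F x) / t n) \<longlonglongrightarrow> grad F x \<bullet> b"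
      using tendsto_at_iff_sequentially[THEN iffD1, OF grad_directional_quotient_tendsto[OF diff],
          rule_format, OF t(2) t(1)] by (simp add: comp_def)
  next
    fix n
    show "(\<lambda>x. (F (x + t n *\<^sub>R b) - F x) / t n) \<in> borel_measurable borel"
      by (intro borel_measurable_continuous_onI continuous_intros
          continuous_on_compose2[OF cont]) (use t(2) in auto)
  qed
qed

lemma L_smooth_bounded_below_nonneg:
  fixes f :: "real^'n::finite \<Rightarrow> real"
  assumes smooth: "L_smooth L f" and bdd: "bdd_below (range f)"
  shows "0 \<le> L"
proof (rule ccontr)
  assume "\<not> 0 \<le> L"
  obtain B where B: "\<And>x. B \<le> f x" using bdd unfolding bdd_below_def by auto
  obtain e :: "real^'n" where e: "norm e = 1" using vector_choose_size[of 1] by auto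
  \<comment> \<open>With \<open>L < 0\<close> the quadratic upper bound sends \<open>f\<close> to \<open>-\<infinity>\<close> along a descent direction.\<close>
  define v where "v = (if grad f 0 \<bullet> e \<le> 0 then e else - e)"
  have v: "norm v = 1" "grad f 0 \<bullet> v \<le> 0" using e by (auto simp: v_def)
  define t where "t = sqrt (2 * (\<bar>f 0 - B\<bar> + 1) / (- L))"
  have "0 \<le> 2 * (\<bar>f 0 - B\<bar> + 1) / (- L)"
    using \<open>\<not> 0 \<le> L\<close> by (intro divide_nonneg_pos) auto
  then have t: "0 \<le> t" "t^2 = 2 * (\<bar>f 0 - B\<bar> + 1) / (- L)"
    by (simp_all add: t_def)
  have "f (0 + t *\<^sub>R v) \<le> f 0 + grad f 0 \<bullet> (t *\<^sub>R v) + L / 2 * (norm (t *\<^sub>R v))^2"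
    using smooth unfolding L_smooth_def by blast
  also have "\<dots> \<le> f 0 + L / 2 * t^2"
    using v t by (simp add: mult_nonneg_nonpos)
  also have "L / 2 * t^2 = - (\<bar>f 0 - B\<bar> + 1)"
    using \<open>\<not> 0 \<le> L\<close> by (simp add: t(2) field_simps)
  finally show False using B[of "t *\<^sub>R v"] by simp
qed

lemma L_smooth_grad_norm_sq_le:
  fixes f :: "real^'n::finite \<Rightarrow> real"
  assumes smooth: "L_smooth L f" and bdd: "bdd_below (range f)" and L: "0 < L"
  shows "(norm (grad f x))^2 \<le> 2 * L * (f x - Inf (range f))"
proof -
  let ?g = "grad f x"
  let ?h = "(- 1 / L) *\<^sub>R ?g"
  have "Inf (range f) \<le> f (x + ?h)" using bdd by (simp add: cInf_lower)
  also have "\<dots> \<le> f x + ?g \<bullet> ?h + L / 2 * (norm ?h)^2"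
    using smooth unfolding L_smooth_def by blast
  also have "?g \<bullet> ?h = - ((norm ?g)^2 / L)"
    by (simp add: power2_norm_eq_inner)
  also have "(norm ?h)^2 = (norm ?g)^2 / L^2"
    using L by (simp add: power_divide)
  also have "f x + - ((norm ?g)^2 / L) + L / 2 * ((norm ?g)^2 / L^2) = f x - (norm ?g)^2 / (2 * L)"
    using L by (simp add: power2_eq_square field_simps)
  finally show ?thesis using L by (simp add: field_simps)
qed

lemma (in prob_space) nn_integral_PiM_case_nat:
  assumes [measurable]: "g \<in> borel_measurable (\<Pi>\<^sub>M i\<in>UNIV. M)"
  shows "(\<integral>\<^sup>+\<omega>. g \<omega> \<partial>(\<Pi>\<^sub>M i\<in>UNIV. M)) = (\<integral>\<^sup>+x. \<integral>\<^sup>+\<omega>. g (case_nat x \<omega>) \<partial>(\<Pi>\<^sub>M i\<in>UNIV. M) \<partial>M)"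
proof -
  interpret S: sequence_space M ..
  have [measurable]: "(\<lambda>p. case_nat (fst p) (snd p)) \<in> measurable (M \<Otimes>\<^sub>M S.S) S.S"
    by (simp add: split_beta')
  have "sigma_finite_measure S.S"
    by (intro prob_space_imp_sigma_finite prob_space_PiM prob_space_axioms)
  have "(\<integral>\<^sup>+\<omega>. g \<omega> \<partial>S.S) = (\<integral>\<^sup>+p. g (case_nat (fst p) (snd p)) \<partial>(M \<Otimes>\<^sub>M S.S))"
    by (subst S.PiM_iter[symmetric]) (simp add: nn_integral_distr split_beta')
  also have "\<dots> = (\<integral>\<^sup>+x. \<integral>\<^sup>+\<omega>. g (case_nat x \<omega>) \<partial>S.S \<partial>M)"
    using sigma_finite_measure.nn_integral_fst[OF \<open>sigma_finite_measure S.S\<close>,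
        of "\<lambda>p. g (case_nat (fst p) (snd p))" M] by simp
  finally show ?thesis .
qed

lemma (in prob_space) nn_integral_const_add:
  assumes "g \<in> borel_measurable M"
  shows "(\<integral>\<^sup>+x. c + g x \<partial>M) = c + (\<integral>\<^sup>+x. g x \<partial>M)"
  using assms by (simp add: nn_integral_add emeasure_space_1)

lemma Min_le_weighted_average_ennreal:
  fixes E :: "'a \<Rightarrow> ennreal"
  assumes I: "finite I" "I \<noteq> {}" and w: "\<And>i. i \<in> I \<Longrightarrow> 0 \<le> w i"
    and W: "0 < (\<Sum>i\<in>I. w i)" and B: "(\<Sum>i\<in>I. ennreal (w i) * E i) \<le> ennreal B"
  shows "Min (E ` I) \<le> ennreal (B / (\<Sum>i\<in>I. w i))"
proof -
  let ?W = "\<Sum>i\<in>I. w i"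
  have "ennreal ?W * Min (E ` I) = (\<Sum>i\<in>I. ennreal (w i) * Min (E ` I))"
    by (simp only: sum_distrib_right[symmetric]) (simp add: w)
  also have "\<dots> \<le> (\<Sum>i\<in>I. ennreal (w i) * E i)"
    using I by (intro sum_mono mult_left_mono Min_le) auto
  finally have "ennreal ?W * Min (E ` I) \<le> ennreal B" using B by (rule order_trans)
  then have "ennreal (1 / ?W) * (ennreal ?W * Min (E ` I)) \<le> ennreal (1 / ?W) * ennreal B"
    by (rule mult_left_mono) simp
  moreover have "ennreal (1 / ?W) * (ennreal ?W * Min (E ` I)) = Min (E ` I)"
    using W by (subst mult.assoc[symmetric], subst ennreal_mult'[symmetric]) simp_all
  moreover have "ennreal (1 / ?W) * ennreal B = ennreal (B / ?W)"
    using W by (subst ennreal_mult'[symmetric]) simp_all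
  ultimately show ?thesis by simp
qed

lemma geometric_weights_sum_ge:
  fixes a :: real
  assumes a: "0 \<le> a" and aT: "a * real T \<le> 1"
  shows "real T \<le> 3 * (\<Sum>t<T. (1 / (1 + a))^Suc t)"
proof -
  \<comment> \<open>Every weight is at least \<open>(1 + a)\<^sup>-\<^sup>T \<ge> e\<^sup>-\<^sup>a\<^sup>T \<ge> 1/3\<close>.\<close>
  have "(1 + a)^T \<le> exp a ^ T" using a by (intro power_mono) auto
  also have "\<dots> \<le> exp 1" using aT by (simp add: exp_of_nat_mult[symmetric] mult.commute)
  also have "\<dots> \<le> 3" by (rule exp_le)
  finally have "1 / 3 \<le> 1 / (1 + a)^T"
    using a by (intro divide_left_mono) auto
  then have third: "1 / 3 \<le> (1 / (1 + a))^T" by (simp add: power_one_over)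
  have "(1 / (1 + a))^T \<le> (1 / (1 + a))^Suc t" if "t < T" for t
    using a that by (intro power_decreasing) auto
  then have "real T * (1 / (1 + a))^T \<le> (\<Sum>t<T. (1 / (1 + a))^Suc t)"
    using sum_mono[of "{..<T}" "\<lambda>_. (1 / (1 + a))^T"] by simp
  moreover have "real T \<le> 3 * (real T * (1 / (1 + a))^T)"
    using mult_left_mono[OF third, of "3 * real T"] by simp
  ultimately show ?thesis by linarith
qed

lemma step_size_condition:
  fixes \<gamma> L P :: real
  assumes "0 < \<gamma>" "0 < L" "0 \<le> P" "\<gamma> \<le> 1 / (L * sqrt P)"
  shows "\<gamma>^2 * L^2 * P \<le> 1"
proof -
  have "0 < sqrt P" using assms by (cases "P = 0") auto
  then have "\<gamma> * (L * sqrt P) \<le> 1" using assms by (simp add: field_simps)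
  then have "(\<gamma> * (L * sqrt P))^2 \<le> 1" using assms \<open>0 < sqrt P\<close> by (simp add: power_le_one)
  then show ?thesis using assms by (simp add: power_mult_distrib)
qed

section \<open>The sketched objective\<close>

locale sketched_objective =
  fixes f :: "real^'n::finite \<Rightarrow> real" and s :: "real^'n" and D :: "(real^'n^'n) measure"
    and Lf :: real
  assumes D_prob: "prob_space D" and D_sets: "sets D = sets borel"
    and smooth: "L_smooth Lf f" and f_bdd: "bdd_below (range f)"
    and Lmax_fin: "\<exists>L. AE S in D. lambda_max (transpose S ** S) \<le> L"
    and gram_integrable: "integrable D (\<lambda>S. transpose S ** S)"
    and Lf_pos: "0 < Lf"
begin

sublocale prob_space D by (rule D_prob)

abbreviation "f_inf \<equiv> Inf (range f)"
abbreviation "ft \<equiv> f_tilde D f s"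
abbreviation "ft_inf \<equiv> Inf (range ft)"
abbreviation "Lmax \<equiv> L_S_max D"

definition sk_point :: "real^'n^'n \<Rightarrow> real^'n \<Rightarrow> real^'n" where
  "sk_point S y = s + S *v (y - s)"

definition sk_grad :: "real^'n^'n \<Rightarrow> real^'n \<Rightarrow> real^'n" where
  "sk_grad S y = transpose S *v grad f (sk_point S y)"

definition mean_sk_grad :: "real^'n \<Rightarrow> real^'n" where
  "mean_sk_grad y = (\<integral>S. sk_grad S y \<partial>D)"

lemma f_differentiable: "f differentiable (at x)"
  using smooth unfolding L_smooth_def by blast

lemma f_quadratic_bound: "f (x + h) \<le> f x + grad f x \<bullet> h + Lf / 2 * (norm h)^2"
  using smooth unfolding L_smooth_def by blast

lemma f_inf_le: "f_inf \<le> f x"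
  using f_bdd by (simp add: cInf_lower)

lemma f_continuous: "continuous_on UNIV f"
  using f_differentiable
  by (meson continuous_at_imp_continuous_on differentiable_imp_continuous_within)

lemma grad_f_measurable: "grad f \<in> borel_measurable borel"
  by (rule grad_borel_measurable[OF f_differentiable])

lemma norm_grad_f_sq_le: "(norm (grad f x))^2 \<le> 2 * Lf * (f x - f_inf)"
  by (rule L_smooth_grad_norm_sq_le[OF smooth f_bdd Lf_pos])

lemma measurable_D: "measurable D M = measurable borel M"
  by (rule measurable_cong_sets[OF D_sets refl])

lemma ft_eq: "ft y = (\<integral>S. f (sk_point S y) \<partial>D)"
  by (simp add: f_tilde_def f_S_def sk_point_def)

lemma nonneg_if_AE_lambda_max_le:
  assumes "AE S in D. lambda_max (transpose S ** S) \<le> L"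
  shows "0 \<le> L"
proof -
  have "AE S in D. 0 \<le> L"
    using assms by eventually_elim (use lambda_max_gram_nonneg order_trans in blast)
  then show ?thesis by simp
qed

lemma AE_lambda_max_le_L_S_max: "AE S in D. lambda_max (transpose S ** S) \<le> Lmax"
proof -
  let ?A = "{L. AE S in D. lambda_max (transpose S ** S) \<le> L}"
  have "?A \<noteq> {}" using Lmax_fin by auto
  have "bdd_below ?A"
    by (rule bdd_belowI[where m=0]) (simp add: nonneg_if_AE_lambda_max_le)
  \<comment> \<open>The infimum is attained: it is approached by countably many bounds \<open>Lmax + 1/(n+1)\<close>.\<close>
  have "AE S in D. \<forall>n. lambda_max (transpose S ** S) \<le> Lmax + inverse (real (Suc n))"
  proof (subst AE_all_countable, rule allI)
    fix n
    obtain L where "L \<in> ?A" "L < Lmax + inverse (real (Suc n))"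
      using cInf_lessD[OF \<open>?A \<noteq> {}\<close>, of "Lmax + inverse (real (Suc n))"]
      by (auto simp: L_S_max_def)
    then show "AE S in D. lambda_max (transpose S ** S) \<le> Lmax + inverse (real (Suc n))"
      by (auto elim: eventually_mono)
  qed
  then show ?thesis
  proof eventually_elim
    case (elim S)
    show ?case
    proof (rule ccontr)
      assume "\<not> ?case"
      then obtain n where "inverse (real (Suc n)) < lambda_max (transpose S ** S) - Lmax"
        using reals_Archimedean by (metis diff_gt_0_iff_gt not_le)
      with elim show False by (metis add.commute less_diff_eq not_le)
    qed
  qed
qed

lemma L_S_max_nonneg: "0 \<le> Lmax"
  by (rule nonneg_if_AE_lambda_max_le[OF AE_lambda_max_le_L_S_max])

lemma AE_sketch_norm_le:
  "AE S in D. \<forall>v. norm (S *v v) \<le> sqrt Lmax * norm v \<and> norm (transpose S *v v) \<le> sqrt Lmax * norm v"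
  using AE_lambda_max_le_L_S_max
  by eventually_elim (metis norm_matrix_vector_mult_le_sqrt norm_transpose_matrix_vector_le)

lemma sk_point_add: "sk_point S (y + h) = sk_point S y + S *v h"
  by (simp add: sk_point_def matrix_vector_right_distrib algebra_simps)

lemma sk_grad_inner: "sk_grad S y \<bullet> h = grad f (sk_point S y) \<bullet> (S *v h)"
  unfolding sk_grad_def by (simp add: inner_matrix_vector_mult_left inner_commute)

lemma f_sk_point_quadratic_bound:
  "f (sk_point S (y + h)) \<le> f (sk_point S y) + sk_grad S y \<bullet> h + Lf / 2 * (norm (S *v h))^2"
  unfolding sk_point_add sk_grad_inner by (rule f_quadratic_bound)

lemma f_measurable [measurable]: "f \<in> borel_measurable borel"
  by (rule borel_measurable_continuous_onI[OF f_continuous])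

declare grad_f_measurable [measurable]

lemma sk_point_measurable [measurable]:
  assumes [measurable]: "A \<in> borel_measurable M" "y \<in> borel_measurable M"
  shows "(\<lambda>x. sk_point (A x) (y x)) \<in> borel_measurable M"
  unfolding sk_point_def by measurable

lemma sk_grad_measurable [measurable]:
  assumes [measurable]: "A \<in> borel_measurable M" "y \<in> borel_measurable M"
  shows "(\<lambda>x. sk_grad (A x) (y x)) \<in> borel_measurable M"
  unfolding sk_grad_def by measurable

lemma id_measurable_D [measurable]: "(\<lambda>S. S) \<in> borel_measurable D"
  by (simp add: measurable_D)

lemma sq_le_of_le_sqrt_L_S_max:
  assumes "a \<le> sqrt Lmax * b" "0 \<le> a"
  shows "a^2 \<le> Lmax * b^2"
proof -
  have "a^2 \<le> (sqrt Lmax * b)^2" using assms by (intro power_mono) auto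
  then show ?thesis using L_S_max_nonneg by (simp add: power_mult_distrib)
qed

lemma norm_sk_grad_sq_le:
  assumes "\<forall>v. norm (transpose S *v v) \<le> sqrt Lmax * norm v"
  shows "(norm (sk_grad S y))^2 \<le> 2 * Lf * Lmax * (f (sk_point S y) - f_inf)"
proof -
  have "(norm (sk_grad S y))^2 \<le> Lmax * (norm (grad f (sk_point S y)))^2"
    unfolding sk_grad_def using assms by (intro sq_le_of_le_sqrt_L_S_max) auto
  also have "\<dots> \<le> Lmax * (2 * Lf * (f (sk_point S y) - f_inf))"
    using norm_grad_f_sq_le L_S_max_nonneg by (intro mult_left_mono)
  finally show ?thesis by (simp add: algebra_simps)
qed

definition sk_value_bound :: "real \<Rightarrow> real" where
  "sk_value_bound R = f s + norm (grad f s) * (sqrt Lmax * R) + Lf / 2 * (Lmax * R^2)"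

definition sk_grad_bound :: "real \<Rightarrow> real" where
  "sk_grad_bound R = sqrt (2 * Lf * Lmax * (sk_value_bound R - f_inf))"

lemma AE_sk_bounds:
  assumes R: "norm (y - s) \<le> R"
  shows "AE S in D. f_inf \<le> f (sk_point S y) \<and> f (sk_point S y) \<le> sk_value_bound R \<and>
    norm (sk_grad S y) \<le> sk_grad_bound R"
  using AE_sketch_norm_le
proof eventually_elim
  case (elim S)
  let ?w = "S *v (y - s)"
  have w: "norm ?w \<le> sqrt Lmax * R"
    using elim R by (meson mult_left_mono order_trans real_sqrt_ge_zero L_S_max_nonneg)
  have "f (sk_point S y) \<le> f s + grad f s \<bullet> ?w + Lf / 2 * (norm ?w)^2"
    unfolding sk_point_def by (rule f_quadratic_bound)
  also have "grad f s \<bullet> ?w \<le> norm (grad f s) * (sqrt Lmax * R)"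
    using norm_cauchy_schwarz[of "grad f s" ?w] w by (meson mult_left_mono norm_ge_zero order_trans)
  also have "(norm ?w)^2 \<le> Lmax * R^2"
    using w by (intro sq_le_of_le_sqrt_L_S_max) auto
  finally have up: "f (sk_point S y) \<le> sk_value_bound R"
    using Lf_pos by (simp add: sk_value_bound_def)
  have "(norm (sk_grad S y))^2 \<le> 2 * Lf * Lmax * (sk_value_bound R - f_inf)"
    using norm_sk_grad_sq_le[of S y] elim up Lf_pos L_S_max_nonneg
    by (smt (verit) mult_left_mono mult_nonneg_nonneg)
  then have "norm (sk_grad S y) \<le> sk_grad_bound R"
    unfolding sk_grad_bound_def by (rule real_le_rsqrt)
  with up show ?case using f_inf_le by blast
qed

lemma integrable_f_sk_point: "integrable D (\<lambda>S. f (sk_point S y))"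
proof (rule integrable_const_bound[where B="\<bar>f_inf\<bar> + \<bar>sk_value_bound (norm (y - s))\<bar>"])
  show "AE S in D. norm (f (sk_point S y)) \<le> \<bar>f_inf\<bar> + \<bar>sk_value_bound (norm (y - s))\<bar>"
    using AE_sk_bounds[of y, OF order_refl] by eventually_elim auto
qed simp

lemma integrable_sk_grad: "integrable D (\<lambda>S. sk_grad S y)"
  by (rule integrable_const_bound[where B="sk_grad_bound (norm (y - s))"])
     (use AE_sk_bounds[of y, OF order_refl] in \<open>auto elim: eventually_mono\<close>)

lemma integrable_norm_sk_grad_sq: "integrable D (\<lambda>S. (norm (sk_grad S y))^2)"
proof (rule integrable_const_bound[where B="(sk_grad_bound (norm (y - s)))^2"])
  show "AE S in D. norm ((norm (sk_grad S y))^2) \<le> (sk_grad_bound (norm (y - s)))^2"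
    using AE_sk_bounds[of y, OF order_refl] by eventually_elim (auto intro: power_mono)
qed simp

lemma integrable_norm_sketch_sq: "integrable D (\<lambda>S. (norm (S *v h))^2)"
proof (rule integrable_const_bound[where B="Lmax * (norm h)^2"])
  show "AE S in D. norm ((norm (S *v h))^2) \<le> Lmax * (norm h)^2"
    using AE_sketch_norm_le by eventually_elim (simp add: sq_le_of_le_sqrt_L_S_max)
qed simp

lemma f_inf_le_ft: "f_inf \<le> ft y"
proof -
  have "(\<integral>S. f_inf \<partial>D) \<le> (\<integral>S. f (sk_point S y) \<partial>D)"
    by (rule integral_mono) (auto intro: integrable_f_sk_point f_inf_le)
  then show ?thesis by (simp add: ft_eq prob_space)
qed

lemma mean_gram_symmetric:
  "transpose (\<integral>S. transpose S ** S \<partial>D) = (\<integral>S. transpose S ** S \<partial>D)"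
  using integral_bounded_linear[OF bounded_linear_transpose gram_integrable]
  by (simp add: transpose_gram_matrix)

lemma integral_norm_sketch_sq_le: "(\<integral>S. (norm (S *v h))^2 \<partial>D) \<le> L_D D * (norm h)^2"
proof -
  have "(\<integral>S. (norm (S *v h))^2 \<partial>D) = h \<bullet> ((\<integral>S. transpose S ** S \<partial>D) *v h)"
    unfolding norm_matrix_vector_mult_sq
    by (rule integral_bounded_linear[OF bounded_linear_quadratic_form gram_integrable])
  also have "\<dots> \<le> L_D D * (norm h)^2"
    unfolding L_D_def by (rule quadratic_form_le_lambda_max[OF mean_gram_symmetric])
  finally show ?thesis .
qed

lemma L_D_nonneg: "0 \<le> L_D D"
proof -
  obtain v :: "real^'n" where v: "norm v = 1" using vector_choose_size[of 1] by auto
  have "0 \<le> (\<integral>S. (norm (S *v v))^2 \<partial>D)" by simp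
  also have "\<dots> \<le> L_D D" using integral_norm_sketch_sq_le[of v] v by simp
  finally show ?thesis .
qed

lemma integral_sk_grad_inner: "(\<integral>S. sk_grad S y \<bullet> h \<partial>D) = mean_sk_grad y \<bullet> h"
  unfolding mean_sk_grad_def by (rule integral_inner_left[OF integrable_sk_grad])

lemma ft_quadratic_bound: "ft (y + h) \<le> ft y + mean_sk_grad y \<bullet> h + Lf * L_D D / 2 * (norm h)^2"
proof -
  have "ft (y + h) \<le> (\<integral>S. f (sk_point S y) + sk_grad S y \<bullet> h + Lf / 2 * (norm (S *v h))^2 \<partial>D)"
    unfolding ft_eq
    by (intro integral_mono f_sk_point_quadratic_bound integrable_f_sk_point Bochner_Integration.integrable_add
        integrable_mult_right integrable_norm_sketch_sq integrable_inner_left integrable_sk_grad)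
  also have "\<dots> = ft y + mean_sk_grad y \<bullet> h + Lf / 2 * (\<integral>S. (norm (S *v h))^2 \<partial>D)"
    using integrable_f_sk_point integrable_norm_sketch_sq integrable_inner_left[OF integrable_sk_grad]
    by (simp add: ft_eq integral_sk_grad_inner[symmetric])
  also have "\<dots> \<le> ft y + mean_sk_grad y \<bullet> h + Lf / 2 * (L_D D * (norm h)^2)"
    using Lf_pos integral_norm_sketch_sq_le by simp
  finally show ?thesis by (simp add: algebra_simps)
qed

lemma integral_norm_sk_grad_sq_le:
  "(\<integral>S. (norm (sk_grad S y))^2 \<partial>D) \<le> 2 * Lf * Lmax * (ft y - f_inf)"
proof -
  have "(\<integral>S. (norm (sk_grad S y))^2 \<partial>D) \<le> (\<integral>S. 2 * Lf * Lmax * (f (sk_point S y) - f_inf) \<partial>D)"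
    using AE_sketch_norm_le
    by (intro integral_mono_AE integrable_norm_sk_grad_sq) (auto elim!: eventually_mono
        intro: norm_sk_grad_sq_le integrable_f_sk_point)
  also have "\<dots> = 2 * Lf * Lmax * (ft y - f_inf)"
    using integrable_f_sk_point by (simp add: ft_eq prob_space)
  finally show ?thesis .
qed

section \<open>Differentiability of the sketched objective\<close>

lemma has_derivative_f_sk_point:
  "((\<lambda>y'. f (sk_point S y')) has_derivative (\<lambda>h. sk_grad S y \<bullet> h)) (at y)"
proof -
  have "(sk_point S has_derivative (\<lambda>h. S *v h)) (at y)"
    unfolding sk_point_def
    by (auto intro!: derivative_eq_intros bounded_linear.has_derivative[OF matrix_vector_mul_bounded_linear]
        simp: matrix_vector_mult_diff_distrib)
  from has_derivative_compose[OF this has_derivative_grad[OF f_differentiable]]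
  show ?thesis by (simp add: sk_grad_inner)
qed

definition sk_remainder :: "real^'n^'n \<Rightarrow> real^'n \<Rightarrow> real^'n \<Rightarrow> real" where
  "sk_remainder S y h = (f (sk_point S (y + h)) - f (sk_point S y) - sk_grad S y \<bullet> h) / norm h"

lemma sk_remainder_tendsto_zero: "((\<lambda>h. sk_remainder S y h) \<longlongrightarrow> 0) (at 0)"
proof -
  have "((\<lambda>h. \<bar>sk_remainder S y h\<bar>) \<longlongrightarrow> 0) (at 0)"
    using has_derivative_f_sk_point[of S y]
    unfolding has_derivative_at sk_remainder_def by (simp add: abs_divide)
  then show ?thesis by (simp only: tendsto_rabs_zero_iff)
qed

lemma abs_sk_remainder_numerator_le:
  "\<bar>f (sk_point S (y + h)) - f (sk_point S y) - sk_grad S y \<bullet> h\<bar>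
    \<le> (norm (sk_grad S y) + norm (sk_grad S (y + h))) * norm h + Lf / 2 * (norm (S *v h))^2"
proof -
  have "S *v (- h) = - (S *v h)"
    using matrix_vector_mult_diff_distrib[of S 0 h] by simp
  then have "f (sk_point S y) \<le> f (sk_point S (y + h)) + sk_grad S (y + h) \<bullet> (- h) + Lf / 2 * (norm (S *v h))^2"
    using f_sk_point_quadratic_bound[of S "y + h" "- h"] by simp
  moreover have "\<bar>sk_grad S y \<bullet> h\<bar> \<le> norm (sk_grad S y) * norm h"
    "\<bar>sk_grad S (y + h) \<bullet> h\<bar> \<le> norm (sk_grad S (y + h)) * norm h"
    by (rule Cauchy_Schwarz_ineq2)+
  ultimately show ?thesis
    using f_sk_point_quadratic_bound[of S y h] Lf_pos by (auto simp: abs_le_iff algebra_simps)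
qed

lemma AE_abs_sk_remainder_le:
  assumes h: "norm h \<le> B"
  shows "AE S in D. \<bar>sk_remainder S y h\<bar> \<le> 2 * sk_grad_bound (norm (y - s) + B) + Lf * Lmax * B"
proof -
  let ?K = "sk_grad_bound (norm (y - s) + B)"
  have B: "0 \<le> B" using h norm_ge_zero order_trans by blast
  have "norm (y + h - s) \<le> norm (y - s) + norm h"
    using norm_triangle_ineq[of "y - s" h] by (simp add: algebra_simps)
  then have R: "norm (y + h - s) \<le> norm (y - s) + B" "norm (y - s) \<le> norm (y - s) + B"
    using h B by auto
  show ?thesis
    using AE_sk_bounds[OF R(1)] AE_sk_bounds[OF R(2)] AE_sketch_norm_le
  proof eventually_elim
    case (elim S)
    have "Lf / 2 * (norm (S *v h))^2 \<le> Lf / 2 * (Lmax * (norm h)^2)"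
      using elim(3) Lf_pos by (simp add: sq_le_of_le_sqrt_L_S_max)
    also have "\<dots> \<le> Lf / 2 * (Lmax * (B * norm h))"
      using h Lf_pos L_S_max_nonneg
      by (intro mult_left_mono) (auto simp: power2_eq_square intro: mult_right_mono)
    also have "\<dots> \<le> Lf * Lmax * B * norm h"
      using Lf_pos L_S_max_nonneg B by (simp add: mult_nonneg_nonneg)
    finally have "\<bar>f (sk_point S (y + h)) - f (sk_point S y) - sk_grad S y \<bullet> h\<bar>
        \<le> (2 * ?K + Lf * Lmax * B) * norm h"
      using abs_sk_remainder_numerator_le[of S y h] elim(1,2)
        mult_right_mono[of "norm (sk_grad S y) + norm (sk_grad S (y + h))" "2 * ?K" "norm h"]
      by (simp add: algebra_simps)
    moreover have "0 \<le> ?K" using elim(2) norm_ge_zero order_trans by blast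
    then have "0 \<le> 2 * ?K + Lf * Lmax * B" using Lf_pos L_S_max_nonneg B by simp
    ultimately show ?case
      by (cases "h = 0") (simp_all add: sk_remainder_def abs_divide divide_le_eq)
  qed
qed

lemma integral_sk_remainder:
  "(\<integral>S. sk_remainder S y h \<partial>D) = (ft (y + h) - ft y - mean_sk_grad y \<bullet> h) / norm h"
  using integrable_f_sk_point integrable_inner_left[OF integrable_sk_grad]
  by (simp add: sk_remainder_def ft_eq integral_sk_grad_inner[symmetric])

lemma has_derivative_ft: "(ft has_derivative (\<lambda>h. mean_sk_grad y \<bullet> h)) (at y)"
proof -
  \<comment> \<open>Differentiation under the integral, by dominated convergence along sequences \<open>h\<^sub>i \<rightarrow> 0\<close>.\<close>
  have "((\<lambda>h. \<integral>S. sk_remainder S y h \<partial>D) \<longlongrightarrow> 0) (at 0)"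
  proof (subst tendsto_at_iff_sequentially, intro allI impI)
    fix X :: "nat \<Rightarrow> real^'n" assume X0: "\<forall>i. X i \<in> UNIV - {0}" and X: "X \<longlonglongrightarrow> 0"
    obtain B where B: "\<And>i. norm (X i) \<le> B"
      using convergent_imp_Bseq[OF convergentI[OF X]] by (auto elim!: BseqE)
    have "(\<lambda>i. \<integral>S. sk_remainder S y (X i) \<partial>D) \<longlonglongrightarrow> (\<integral>S. 0 \<partial>D)"
    proof (rule integral_dominated_convergence
        [where w="\<lambda>_. 2 * sk_grad_bound (norm (y - s) + B) + Lf * Lmax * B"])
      show "AE S in D. (\<lambda>i. sk_remainder S y (X i)) \<longlonglongrightarrow> 0"
        using tendsto_at_iff_sequentially[THEN iffD1, OF sk_remainder_tendsto_zero, rule_format, OF _ X] X0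
        by (simp add: comp_def)
      show "AE S in D. norm (sk_remainder S y (X i)) \<le> 2 * sk_grad_bound (norm (y - s) + B) + Lf * Lmax * B"
        for i using AE_abs_sk_remainder_le[OF B] by simp
      show "(\<lambda>S. sk_remainder S y (X i)) \<in> borel_measurable D" for i
        unfolding sk_remainder_def by measurable
    qed simp_all
    then show "((\<lambda>h. \<integral>S. sk_remainder S y h \<partial>D) \<circ> X) \<longlonglongrightarrow> 0" by (simp add: comp_def)
  qed
  then have "((\<lambda>h. \<bar>ft (y + h) - ft y - mean_sk_grad y \<bullet> h\<bar> / norm h) \<longlongrightarrow> 0) (at 0)"
    using tendsto_rabs_zero by (fastforce simp: integral_sk_remainder abs_divide)
  then show ?thesis unfolding has_derivative_at by (simp add: bounded_linear_inner_right)
qed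

lemma ft_differentiable: "ft differentiable (at y)"
  using has_derivative_ft unfolding differentiable_def by blast

lemma grad_ft: "grad ft y = mean_sk_grad y"
  by (rule grad_eqI[OF has_derivative_ft])

lemma ft_measurable [measurable]: "ft \<in> borel_measurable borel"
  using ft_differentiable
  by (intro borel_measurable_continuous_onI)
     (meson continuous_at_imp_continuous_on differentiable_imp_continuous_within)

lemma mean_sk_grad_measurable [measurable]: "mean_sk_grad \<in> borel_measurable borel"
  using grad_borel_measurable[OF ft_differentiable] by (simp add: grad_ft[abs_def])

section \<open>Expected descent of one step\<close>

lemma ft_bdd_below: "bdd_below (range ft)"
  by (rule bdd_belowI[where m=f_inf]) (auto intro: f_inf_le_ft)

lemma ft_inf_le: "ft_inf \<le> ft y"
  by (rule cInf_lower[OF _ ft_bdd_below]) simp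

lemma f_inf_le_ft_inf: "f_inf \<le> ft_inf"
  by (rule cInf_greatest) (auto intro: f_inf_le_ft)

lemma expected_descent:
  assumes \<gamma>: "0 < \<gamma>"
  defines "a \<equiv> \<gamma>^2 * Lf^2 * L_D D * Lmax"
  shows "(\<integral>\<^sup>+S. ennreal (ft (y - \<gamma> *\<^sub>R sk_grad S y) - ft_inf) \<partial>D) + ennreal (\<gamma> * (norm (mean_sk_grad y))^2)
    \<le> ennreal ((1 + a) * (ft y - ft_inf) + a * (ft_inf - f_inf))"
proof -
  let ?G = "mean_sk_grad y"
  define R where "R S = ft y - ft_inf - \<gamma> * (?G \<bullet> sk_grad S y) + Lf * L_D D / 2 * \<gamma>^2 * (norm (sk_grad S y))^2"
    for S
  have step_le: "ft (y - \<gamma> *\<^sub>R sk_grad S y) - ft_inf \<le> R S" for S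
    using ft_quadratic_bound[of y "- \<gamma> *\<^sub>R sk_grad S y"] \<gamma>
    by (simp add: R_def power_mult_distrib algebra_simps)
  have R_nonneg: "0 \<le> R S" for S
    using step_le[of S] ft_inf_le[of "y - \<gamma> *\<^sub>R sk_grad S y"] by linarith
  have R_int: "integrable D R"
    unfolding R_def using integrable_sk_grad[of y] integrable_norm_sk_grad_sq[of y] by simp
  have R_integral: "(\<integral>S. R S \<partial>D)
      = ft y - ft_inf - \<gamma> * (norm ?G)^2 + Lf * L_D D / 2 * \<gamma>^2 * (\<integral>S. (norm (sk_grad S y))^2 \<partial>D)"
    unfolding R_def using integrable_sk_grad[of y] integrable_norm_sk_grad_sq[of y]
    by (simp add: prob_space mean_sk_grad_def power2_norm_eq_inner)
  have real_bound: "(\<integral>S. R S \<partial>D) + \<gamma> * (norm ?G)^2 \<le> (1 + a) * (ft y - ft_inf) + a * (ft_inf - f_inf)"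
  proof -
    have "Lf * L_D D / 2 * \<gamma>^2 * (\<integral>S. (norm (sk_grad S y))^2 \<partial>D)
        \<le> Lf * L_D D / 2 * \<gamma>^2 * (2 * Lf * Lmax * (ft y - f_inf))"
      using Lf_pos L_D_nonneg by (intro mult_left_mono integral_norm_sk_grad_sq_le) auto
    then show ?thesis unfolding R_integral a_def by (simp add: power2_eq_square algebra_simps)
  qed
  have "(\<integral>\<^sup>+S. ennreal (ft (y - \<gamma> *\<^sub>R sk_grad S y) - ft_inf) \<partial>D) \<le> (\<integral>\<^sup>+S. ennreal (R S) \<partial>D)"
    by (intro nn_integral_mono ennreal_leI step_le)
  also have "\<dots> = ennreal (\<integral>S. R S \<partial>D)"
    by (rule nn_integral_eq_integral[OF R_int]) (simp add: R_nonneg)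
  finally have "(\<integral>\<^sup>+S. ennreal (ft (y - \<gamma> *\<^sub>R sk_grad S y) - ft_inf) \<partial>D) + ennreal (\<gamma> * (norm ?G)^2)
      \<le> ennreal (\<integral>S. R S \<partial>D) + ennreal (\<gamma> * (norm ?G)^2)"
    by (rule add_right_mono)
  also have "\<dots> = ennreal ((\<integral>S. R S \<partial>D) + \<gamma> * (norm ?G)^2)"
    using \<gamma> R_nonneg by (simp add: ennreal_plus integral_nonneg)
  also have "\<dots> \<le> ennreal ((1 + a) * (ft y - ft_inf) + a * (ft_inf - f_inf))"
    by (rule ennreal_leI[OF real_bound])
  finally show ?thesis .
qed

section \<open>Unrolling the iteration\<close>

abbreviation "sketch_seqs \<equiv> \<Pi>\<^sub>M i\<in>(UNIV::nat set). D"

lemma sketch_seqs_prob_space: "prob_space sketch_seqs"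
  by (rule prob_space_PiM) (rule D_prob)

lemma sketch_component_measurable [measurable]: "(\<lambda>\<omega>. \<omega> t) \<in> borel_measurable sketch_seqs"
  using measurable_component_singleton[of t UNIV "\<lambda>_. D"] by (simp add: measurable_D)

lemma dsgd_Suc_sk_grad:
  "dsgd f s \<gamma> y \<omega> (Suc t) = dsgd f s \<gamma> y \<omega> t - \<gamma> *\<^sub>R sk_grad (\<omega> t) (dsgd f s \<gamma> y \<omega> t)"
  by (simp add: sk_grad_def sk_point_def)

lemma dsgd_case_nat:
  "dsgd f s \<gamma> y (case_nat A \<omega>) (Suc t) = dsgd f s \<gamma> (y - \<gamma> *\<^sub>R sk_grad A y) \<omega> t"
  by (induction t) (simp_all only: dsgd_Suc_sk_grad dsgd.simps(1) nat.case)

lemma dsgd_measurable [measurable]: "(\<lambda>\<omega>. dsgd f s \<gamma> y \<omega> t) \<in> borel_measurable sketch_seqs"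
proof (induction t)
  case (Suc t)
  note Suc[measurable]
  show ?case unfolding dsgd_Suc_sk_grad by measurable
qed simp

definition descent_potential :: "real \<Rightarrow> real \<Rightarrow> nat \<Rightarrow> real^'n \<Rightarrow> (nat \<Rightarrow> real^'n^'n) \<Rightarrow> ennreal"
  where "descent_potential \<gamma> r T y \<omega> =
    (\<Sum>t<T. ennreal (r^Suc t * \<gamma> * (norm (mean_sk_grad (dsgd f s \<gamma> y \<omega> t)))^2))
    + ennreal (r^T * (ft (dsgd f s \<gamma> y \<omega> T) - ft_inf))"

lemma descent_potential_measurable [measurable]:
  "descent_potential \<gamma> r T y \<in> borel_measurable sketch_seqs"
  unfolding descent_potential_def by measurable

lemma descent_potential_Suc_case_nat:
  assumes "0 \<le> r"
  shows "descent_potential \<gamma> r (Suc T) y (case_nat A \<omega>)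
    = ennreal r * (ennreal (\<gamma> * (norm (mean_sk_grad y))^2)
        + descent_potential \<gamma> r T (y - \<gamma> *\<^sub>R sk_grad A y) \<omega>)"
  using assms
  by (simp add: descent_potential_def sum.lessThan_Suc_shift dsgd_case_nat distrib_left
      sum_distrib_left ennreal_mult'[symmetric] mult.assoc add.assoc dsgd.simps(1)
      del: dsgd.simps(2) sum.lessThan_Suc)

lemma nn_integral_descent_potential_le:
  assumes \<gamma>: "0 < \<gamma>"
  defines "a \<equiv> \<gamma>^2 * Lf^2 * L_D D * Lmax"
  defines "r \<equiv> 1 / (1 + a)"
  shows "(\<integral>\<^sup>+\<omega>. descent_potential \<gamma> r T y \<omega> \<partial>sketch_seqs)
    \<le> ennreal (ft y - ft_inf) + ennreal (a * (ft_inf - f_inf) * (\<Sum>t<T. r^Suc t))"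
proof (induction T arbitrary: y)
  case 0
  show ?case
    by (simp add: descent_potential_def prob_space.emeasure_space_1[OF sketch_seqs_prob_space])
next
  case (Suc T)
  have a: "0 \<le> a" unfolding a_def using L_D_nonneg L_S_max_nonneg by simp
  then have r: "0 \<le> r" "r * (1 + a) = 1" unfolding r_def by auto
  have \<Delta>: "0 \<le> ft_inf - f_inf" using f_inf_le_ft_inf by simp
  define W where "W = (\<Sum>t<T. r^Suc t)"
  have W: "0 \<le> W" unfolding W_def using r by (simp add: sum_nonneg)
  define C where "C = ennreal (\<gamma> * (norm (mean_sk_grad y))^2)"
  define E where "E = ennreal (a * (ft_inf - f_inf) * W)"
  define y' where "y' A = y - \<gamma> *\<^sub>R sk_grad A y" for A
  have [measurable]: "y' \<in> borel_measurable D" unfolding y'_def by measurable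
  have "(\<integral>\<^sup>+\<omega>. descent_potential \<gamma> r (Suc T) y (case_nat A \<omega>) \<partial>sketch_seqs)
      \<le> ennreal r * (C + (ennreal (ft (y' A) - ft_inf) + E))" for A
  proof -
    have "(\<integral>\<^sup>+\<omega>. descent_potential \<gamma> r (Suc T) y (case_nat A \<omega>) \<partial>sketch_seqs)
        = ennreal r * (C + (\<integral>\<^sup>+\<omega>. descent_potential \<gamma> r T (y' A) \<omega> \<partial>sketch_seqs))"
      using r(1)
      by (simp add: descent_potential_Suc_case_nat nn_integral_cmult C_def y'_def
          prob_space.nn_integral_const_add[OF sketch_seqs_prob_space])
    also have "\<dots> \<le> ennreal r * (C + (ennreal (ft (y' A) - ft_inf) + E))"
      using Suc.IH unfolding E_def W_def by (intro mult_left_mono add_left_mono) auto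
    finally show ?thesis .
  qed
  then have "(\<integral>\<^sup>+\<omega>. descent_potential \<gamma> r (Suc T) y \<omega> \<partial>sketch_seqs)
      \<le> (\<integral>\<^sup>+A. ennreal r * (C + (ennreal (ft (y' A) - ft_inf) + E)) \<partial>D)"
    unfolding prob_space.nn_integral_PiM_case_nat[OF D_prob descent_potential_measurable]
    by (blast intro: nn_integral_mono)
  also have "\<dots> = ennreal r * (((\<integral>\<^sup>+A. ennreal (ft (y' A) - ft_inf) \<partial>D) + C) + E)"
    by (simp add: nn_integral_cmult nn_integral_const_add add_ac)
  also have "\<dots> \<le> ennreal r * (ennreal ((1 + a) * (ft y - ft_inf) + a * (ft_inf - f_inf)) + E)"
    using expected_descent[OF \<gamma>, of y] unfolding C_def y'_def a_def
    by (intro mult_left_mono add_right_mono) auto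
  also have "\<dots> = ennreal (r * ((1 + a) * (ft y - ft_inf) + a * (ft_inf - f_inf) + a * (ft_inf - f_inf) * W))"
    using a r \<Delta> W ft_inf_le[of y] by (simp add: E_def ennreal_mult')
  also have "\<dots> = ennreal (ft y - ft_inf) + ennreal (a * (ft_inf - f_inf) * (\<Sum>t<Suc T. r^Suc t))"
  proof -
    have "(\<Sum>t<Suc T. r^Suc t) = r + r * W"
      unfolding W_def sum.lessThan_Suc_shift by (simp add: sum_distrib_left)
    then have "r * ((1 + a) * (ft y - ft_inf) + a * (ft_inf - f_inf) + a * (ft_inf - f_inf) * W)
        = r * (1 + a) * (ft y - ft_inf) + a * (ft_inf - f_inf) * (\<Sum>t<Suc T. r^Suc t)"
      by (simp add: algebra_simps)
    moreover have "0 \<le> a * (ft_inf - f_inf) * (\<Sum>t<Suc T. r^Suc t)"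
      using a r \<Delta> by (simp add: sum_nonneg)
    ultimately show ?thesis using r(2) ft_inf_le[of y] by simp
  qed
  finally show ?case .
qed

lemma dsgd_min_expected_grad_sq_le:
  assumes \<gamma>: "0 < \<gamma>" and T: "1 \<le> T" and \<gamma>T: "\<gamma>^2 * Lf^2 * L_D D * Lmax * real T \<le> 1"
  shows "Min ((\<lambda>t. \<integral>\<^sup>+\<omega>. ennreal ((norm (grad ft (dsgd f s \<gamma> x0 \<omega> t)))^2) \<partial>sketch_seqs) ` {..<T})
    \<le> ennreal (3 * (ft x0 - ft_inf) / (\<gamma> * real T) + \<gamma> * Lf^2 * L_D D * Lmax * (ft_inf - f_inf))"
proof -
  define a where "a = \<gamma>^2 * Lf^2 * L_D D * Lmax"
  define r where "r = 1 / (1 + a)"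
  define W where "W = (\<Sum>t<T. r^Suc t)"
  define E where "E t = (\<integral>\<^sup>+\<omega>. ennreal ((norm (mean_sk_grad (dsgd f s \<gamma> x0 \<omega> t)))^2) \<partial>sketch_seqs)" for t
  have a: "0 \<le> a" unfolding a_def using L_D_nonneg L_S_max_nonneg by simp
  then have r: "0 \<le> r" unfolding r_def by simp
  have d: "0 \<le> ft x0 - ft_inf" using ft_inf_le by simp
  have "(\<Sum>t<T. ennreal (\<gamma> * r^Suc t) * E t)
      = (\<Sum>t<T. \<integral>\<^sup>+\<omega>. ennreal (r^Suc t * \<gamma> * (norm (mean_sk_grad (dsgd f s \<gamma> x0 \<omega> t)))^2) \<partial>sketch_seqs)"
    using \<gamma> r unfolding E_def
    by (simp add: nn_integral_cmult[symmetric] ennreal_mult'[symmetric] mult_ac)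
  also have "\<dots> = (\<integral>\<^sup>+\<omega>. (\<Sum>t<T. ennreal (r^Suc t * \<gamma> * (norm (mean_sk_grad (dsgd f s \<gamma> x0 \<omega> t)))^2)) \<partial>sketch_seqs)"
    by (rule nn_integral_sum[symmetric]) measurable
  also have "\<dots> \<le> (\<integral>\<^sup>+\<omega>. descent_potential \<gamma> r T x0 \<omega> \<partial>sketch_seqs)"
    unfolding descent_potential_def by (intro nn_integral_mono) simp
  also have "\<dots> \<le> ennreal (ft x0 - ft_inf) + ennreal (a * (ft_inf - f_inf) * W)"
    using nn_integral_descent_potential_le[OF \<gamma>] unfolding a_def r_def W_def .
  also have "\<dots> = ennreal (ft x0 - ft_inf + a * (ft_inf - f_inf) * W)"
    using a r d f_inf_le_ft_inf by (simp add: W_def sum_nonneg)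
  finally have weighted: "(\<Sum>t<T. ennreal (\<gamma> * r^Suc t) * E t) \<le> \<dots>" .
  have T3W: "real T \<le> 3 * W"
    unfolding W_def r_def by (rule geometric_weights_sum_ge[OF a]) (use \<gamma>T in \<open>simp add: a_def\<close>)
  then have W: "0 < W" using T by simp
  have weights: "(\<Sum>t<T. \<gamma> * r^Suc t) = \<gamma> * W" by (simp add: W_def sum_distrib_left)
  have "Min (E ` {..<T}) \<le> ennreal ((ft x0 - ft_inf + a * (ft_inf - f_inf) * W) / (\<Sum>t<T. \<gamma> * r^Suc t))"
  proof (rule Min_le_weighted_average_ennreal[OF finite_lessThan _ _ _ weighted])
    show "{..<T} \<noteq> {}" using T by (simp add: lessThan_empty_iff)
    show "0 \<le> \<gamma> * r^Suc t" for t using \<gamma> r by simp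
    show "0 < (\<Sum>t<T. \<gamma> * r^Suc t)" unfolding weights using \<gamma> W by simp
  qed
  also have "(ft x0 - ft_inf + a * (ft_inf - f_inf) * W) / (\<Sum>t<T. \<gamma> * r^Suc t)
      = (ft x0 - ft_inf) / (\<gamma> * W) + \<gamma> * Lf^2 * L_D D * Lmax * (ft_inf - f_inf)"
    using \<gamma> W unfolding weights a_def by (simp add: field_simps power2_eq_square)
  also have "(ft x0 - ft_inf) / (\<gamma> * W) = 3 * (ft x0 - ft_inf) / (\<gamma> * (3 * W))"
    by (metis mult.left_commute mult_divide_mult_cancel_left_if zero_neq_numeral)
  also have "\<dots> \<le> 3 * (ft x0 - ft_inf) / (\<gamma> * real T)"
    using \<gamma> T T3W d by (intro divide_left_mono mult_left_mono mult_pos_pos) auto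
  finally show ?thesis by (simp add: E_def grad_ft ennreal_leI)
qed

end

theorem theorem3:
  fixes f :: "real ^ 'n::finite \<Rightarrow> real"
    and s x0 :: "real ^ 'n"
    and D :: "(real ^ 'n ^ 'n) measure"
    and Lf \<gamma> :: real and T :: nat
  assumes D_prob: "prob_space D"
    and D_sets: "sets D = sets borel"
    and ES_int: "integrable D (\<lambda>S. S)"
    and ES: "(\<integral>S. S \<partial>D) = mat 1"
    and ESS_int: "integrable D (\<lambda>S. transpose S ** S)"
    and smooth: "L_smooth Lf f"
    and bdd: "bdd_below (range f)"
    and Lmax_fin: "\<exists>L. AE S in D. lambda_max (transpose S ** S) \<le> L"
    and T: "T \<ge> 1"
    and \<gamma>_pos: "0 < \<gamma>"
    and \<gamma>_le: "\<gamma> \<le> 1 / (Lf * sqrt (L_D D * L_S_max D * real T))"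
  shows "Min ((\<lambda>t. \<integral>\<^sup>+ \<omega>. ennreal ((norm (grad (f_tilde D f s) (dsgd f s \<gamma> x0 \<omega> t)))\<^sup>2)
                 \<partial>(PiM UNIV (\<lambda>_::nat. D))) ` {..<T})
         \<le> ennreal (3 * (f_tilde D f s x0 - Inf (range (f_tilde D f s))) / (\<gamma> * real T)
                   + \<gamma> * Lf\<^sup>2 * L_D D * L_S_max D * (Inf (range (f_tilde D f s)) - Inf (range f)))"
proof -
  have "Lf \<noteq> 0" using \<gamma>_pos \<gamma>_le by auto
  with L_smooth_bounded_below_nonneg[OF smooth bdd] have Lf: "0 < Lf" by simp
  interpret sketched_objective f s D Lf
    by (rule sketched_objective.intro[OF D_prob D_sets smooth bdd Lmax_fin ESS_int Lf])
  have "\<gamma>^2 * Lf^2 * (L_D D * L_S_max D * real T) \<le> 1"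
    using L_D_nonneg L_S_max_nonneg by (intro step_size_condition[OF \<gamma>_pos Lf _ \<gamma>_le]) simp
  then show ?thesis
    using dsgd_min_expected_grad_sq_le[OF \<gamma>_pos T] by (simp add: mult.assoc)
qed

end
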